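(* Under the hypotheses that $K_1,K_2$ are compact spaces, $G$ is a compact group with Haar probability measure $\lambda$, $f_i\colon K_i\to G$ are continuous surjections and $\mu_i\in P(K_i)$ ($i=1,2$) satisfy $f_i[\mu_i]=\lambda$ with $\{f_i^{-1}[A]:A\in Bor(G)\}$ being $\bigtriangleup$-dense in $Bor(K_i)$ with respect to $\mu_i$, the mapping $\phi\colon G\to P(K_1\times K_2)$, $\phi(y)=\mu_y$, is continuous, where $\mu_y$ denotes the weak$^\ast$ limit of the net $\{\mu_{y,\mathcal E}\}_{\mathcal E\in\mathcal B}$.
   Context: $G=(G,\oplus)$ is a compact Hausdorff group with Haar probability measure $\lambda$; $E\oplus y=\{e\oplus y:e\in E\}$. $\mathcal B$ is the set of finite partitions of $G$ into Borel sets, directed by refinement; $\mathcal E^\ast$ is the set of $E\in\mathcal E$ with $\lambda(E)>0$. $P(X)$ is the space of regular Borel probability measures on a compact space $X$ with the weak$^\ast$ topology; $g[\mu](A)=\mu(g^{-1}[A])$. $\Sigma$ is $\bigtriangleup$-dense in $Bor(K)$ w.r.t. $\mu$ if for every $\varepsilon>0$ and Borel $A$ there is $E\in\Sigma$ with $\mu(A\bigtriangleup E)<\varepsilon$. $\mu_{y,\mathcal E}(D)=\sum_{E\in\mathcal E^\ast}(\mu_1\otimes\mu_2)\big(D\cap(f_1^{-1}[E]\times f_2^{-1}[E\oplus y])\big)/\lambda(E)$ for Borel $D\subseteq K_1\times K_2$ (product measure extended to a regular Borel measure). For each $y\in G$ this net is known to converge weak$^\ast$ to some $\mu_y\in P(K_1\times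 K_2)$. *)

theory Defs
  imports "HOL-Analysis.Analysis" "HOL-Probability.Probability"
begin

definition regular_prob :: "'a::topological_space measure \<Rightarrow> bool" where
  "regular_prob M \<longleftrightarrow> sets M = sets borel \<and> prob_space M \<and>
     (\<forall>A\<in>sets borel.
        emeasure M A = (SUP C\<in>{C. compact C \<and> C \<subseteq> A}. emeasure M C) \<and>
        emeasure M A = (INF U\<in>{U. open U \<and> A \<subseteq> U}. emeasure M U))"

definition rtransl :: "'g::group_add set \<Rightarrow> 'g \<Rightarrow> 'g set" where
  "rtransl E y = (\<lambda>e. e + y) ` E"

definition haar_prob :: "'g::topological_group_add measure \<Rightarrow> bool" where
  "haar_prob lam \<longleftrightarrow> regular_prob lam \<and>
     (\<forall>E\<in>sets borel. \<forall>y. emeasure lam (rtransl E y) = emeasure lam E \<and>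
                          emeasure lam ((\<lambda>e. y + e) ` E) = emeasure lam E)"

definition borel_partitions :: "'g::topological_space set set set" where
  "borel_partitions = {P. finite P \<and> P \<subseteq> sets borel \<and> {} \<notin> P \<and> \<Union>P = UNIV \<and>
       (\<forall>E\<in>P. \<forall>F\<in>P. E \<noteq> F \<longrightarrow> E \<inter> F = {})}"

definition refines :: "'g set set \<Rightarrow> 'g set set \<Rightarrow> bool" where
  "refines Q P \<longleftrightarrow> (\<forall>F\<in>Q. \<exists>E\<in>P. F \<subseteq> E)"

definition partition_net :: "'g::topological_space set set filter" where
  "partition_net = (INF P\<in>borel_partitions. principal {Q\<in>borel_partitions. refines Q P})"

text \<open>The measure \<mu>_{y,E}; nu is the regular Borel extension of \<mu>1 \<otimes> \<mu>2.\<close>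
definition mu_yE :: "'g::group_add measure \<Rightarrow> ('a \<Rightarrow> 'g) \<Rightarrow> ('b \<Rightarrow> 'g) \<Rightarrow>
     ('a::topological_space \<times> 'b::topological_space) measure \<Rightarrow> 'g \<Rightarrow> 'g set set \<Rightarrow> ('a \<times> 'b) measure" where
  "mu_yE lam f1 f2 nu y P = measure_of UNIV (sets borel)
     (\<lambda>D. \<Sum>E\<in>{E\<in>P. measure lam E > 0}.
            emeasure nu (D \<inter> (f1 -` E \<times> f2 -` rtransl E y)) / emeasure lam E)"

definition weak_star_tendsto :: "('i \<Rightarrow> 'x::topological_space measure) \<Rightarrow> 'x measure \<Rightarrow> 'i filter \<Rightarrow> bool" where
  "weak_star_tendsto N M F \<longleftrightarrow>
     (\<forall>h::'x \<Rightarrow> real. continuous_on UNIV h \<longrightarrow>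
        ((\<lambda>i. integral\<^sup>L (N i) h) \<longlongrightarrow> integral\<^sup>L M h) F)"

definition weak_star_continuous :: "('g::topological_space \<Rightarrow> 'x::topological_space measure) \<Rightarrow> bool" where
  "weak_star_continuous phi \<longleftrightarrow>
     (\<forall>h::'x \<Rightarrow> real. continuous_on UNIV h \<longrightarrow> continuous_on UNIV (\<lambda>y. integral\<^sup>L (phi y) h))"

end

theory Submission
  imports Defs
begin

text \<open>For a Borel rectangle \<open>A \<times> A'\<close>, the density hypothesis replaces \<open>A\<close> and \<open>A'\<close> by preimages
  \<open>f\<^sub>1\<^sup>-\<^sup>1[B]\<close> and \<open>f\<^sub>2\<^sup>-\<^sup>1[B']\<close> at a cost bounded uniformly in \<open>y\<close> and \<open>\<E>\<close>, because the
  marginals of \<open>\<mu>\<^sub>y\<^sub>,\<^sub>\<E>\<close> are dominated by \<open>\<mu>\<^sub>1\<close> and \<open>\<mu>\<^sub>2\<close>. As soon as \<open>\<E>\<close> refines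
  \<open>{B, G - B}\<close>, the measure of \<open>f\<^sub>1\<^sup>-\<^sup>1[B] \<times> f\<^sub>2\<^sup>-\<^sup>1[B']\<close> is exactly \<open>\<lambda>(B' \<inter> (B \<oplus> y))\<close>,
  which is continuous in \<open>y\<close> by regularity and invariance of the Haar measure. So
  \<open>y \<mapsto> \<mu>\<^sub>y\<^sub>,\<^sub>\<E>(A \<times> A')\<close> is eventually uniformly close to a continuous function, and so is
  \<open>y \<mapsto> \<integral>h d\<mu>\<^sub>y\<^sub>,\<^sub>\<E>\<close>, since a continuous \<open>h\<close> on the compact space \<open>K\<^sub>1 \<times> K\<^sub>2\<close> is
  uniformly approximated by step functions on finitely many Borel rectangles. The pointwise
  limit \<open>y \<mapsto> \<integral>h d\<mu>\<^sub>y\<close> of such a family is continuous.\<close>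

lemma mem_rtransl: "x \<in> rtransl E y \<longleftrightarrow> x - y \<in> E"
proof
  assume "x \<in> rtransl E y"
  then obtain e where "e \<in> E" "x = e + y" by (auto simp: rtransl_def)
  then show "x - y \<in> E" by simp
next
  assume "x - y \<in> E"
  then show "x \<in> rtransl E y" unfolding rtransl_def by (rule rev_image_eqI) simp
qed

lemma rtransl_eq_vimage: "rtransl E y = (\<lambda>x. x - y) -` E"
  by (rule set_eqI) (simp add: mem_rtransl)

lemma rtransl_rtransl: "rtransl (rtransl E a) b = rtransl E (a + b)"
  by (rule set_eqI) (simp add: mem_rtransl diff_add_eq_diff_diff_swap)

lemma rtransl_empty [simp]: "rtransl {} y = {}"
  by (simp add: rtransl_def)

lemma rtransl_Diff: "rtransl (E - F) y = rtransl E y - rtransl F y"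
  by (rule set_eqI) (simp add: mem_rtransl)

lemma disjoint_rtransl: "E \<inter> F = {} \<Longrightarrow> rtransl E y \<inter> rtransl F y = {}"
  by (simp add: set_eq_iff mem_rtransl)

lemma borel_rtransl:
  fixes E :: "'g::topological_group_add set"
  assumes "E \<in> sets borel"
  shows "rtransl E y \<in> sets borel"
proof -
  have "(\<lambda>x::'g. x - y) \<in> borel_measurable borel"
    by (intro borel_measurable_continuous_onI continuous_intros)
  then show ?thesis
    unfolding rtransl_eq_vimage using assms by (rule measurable_sets_borel)
qed

section \<open>Continuity of translation for Haar measures\<close>

lemma continuous_on_UNIV_realI:
  fixes T :: "'a::topological_space \<Rightarrow> real"
  assumes "\<And>y0 e. e > 0 \<Longrightarrow> eventually (\<lambda>y. \<bar>T y - T y0\<bar> < e) (at y0)"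
  shows "continuous_on UNIV T"
  unfolding continuous_on_def tendsto_iff dist_real_def using assms by simp

text \<open>A tube-lemma argument in \<open>C \<times> {0}\<close> for the continuous map \<open>(x, d) \<mapsto> x + d\<close>.\<close>
lemma compact_rtransl_subset_open:
  fixes C U :: "'g::topological_group_add set"
  assumes C: "compact C" and U: "open U" and CU: "C \<subseteq> U"
  obtains W where "open W" "0 \<in> W" "\<And>d. d \<in> W \<Longrightarrow> rtransl C d \<subseteq> U"
proof -
  let ?S = "(\<lambda>p::'g \<times> 'g. fst p + snd p) -` U"
  have S: "open ?S"
    using U by (intro open_vimage continuous_intros)
  have "\<exists>V W. open V \<and> open W \<and> (c, 0) \<in> V \<times> W \<and> V \<times> W \<subseteq> ?S" if "c \<in> C" for c
  proof -
    have "(c, 0) \<in> ?S" using that CU by auto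
    from open_prod_elim[OF S this] show ?thesis by metis
  qed
  then obtain V W where VW: "\<And>c. c \<in> C \<Longrightarrow> open (V c) \<and> open (W c) \<and> (c, 0) \<in> V c \<times> W c \<and> V c \<times> W c \<subseteq> ?S"
    by metis
  have "C \<subseteq> (\<Union>c\<in>C. V c)" using VW by auto
  then obtain D where D: "D \<subseteq> C" "finite D" "C \<subseteq> (\<Union>c\<in>D. V c)"
    using compactE_image[OF C, of C V] VW by metis
  show ?thesis
  proof
    show "open (\<Inter>c\<in>D. W c)"
      using D VW by (intro open_INT) auto
    show "0 \<in> (\<Inter>c\<in>D. W c)"
      using D VW by auto
    fix d assume d: "d \<in> (\<Inter>c\<in>D. W c)"
    show "rtransl C d \<subseteq> U"
    proof
      fix z assume "z \<in> rtransl C d"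
      then obtain x where x: "x \<in> C" "z = x + d" unfolding rtransl_def by auto
      then obtain c where c: "c \<in> D" "x \<in> V c" using D by auto
      then have "(x, d) \<in> V c \<times> W c" using d by auto
      with VW c D have "(x, d) \<in> ?S" by blast
      then show "z \<in> U" using x by simp
    qed
  qed
qed

lemma regular_prob_inner_compact:
  assumes M: "regular_prob M" and B: "B \<in> sets borel" and e: "e > 0"
  obtains C where "compact C" "C \<subseteq> B" "measure M B < measure M C + e"
proof (cases "measure M B < e")
  case True
  then show ?thesis using that[of "{}"] by simp
next
  case False
  interpret prob_space M using M unfolding regular_prob_def by blast
  have "ennreal (measure M B - e) < emeasure M B"
    using False e by (simp add: emeasure_eq_measure ennreal_less_iff)
  also have "emeasure M B = (SUP C\<in>{C. compact C \<and> C \<subseteq> B}. emeasure M C)"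
    using M B unfolding regular_prob_def by blast
  finally obtain C where C: "compact C" "C \<subseteq> B" "ennreal (measure M B - e) < ennreal (measure M C)"
    by (auto simp: less_SUP_iff emeasure_eq_measure)
  then have "measure M B - e < measure M C"
    using False by (subst (asm) ennreal_less_iff) auto
  then show ?thesis using that C by simp
qed

lemma regular_prob_outer_open:
  assumes M: "regular_prob M" and B: "B \<in> sets borel" and e: "e > 0"
  obtains U where "open U" "B \<subseteq> U" "measure M U < measure M B + e"
proof -
  interpret prob_space M using M unfolding regular_prob_def by blast
  have "(INF U\<in>{U. open U \<and> B \<subseteq> U}. emeasure M U) = emeasure M B"
    using M B unfolding regular_prob_def by metis
  also have "\<dots> < ennreal (measure M B + e)"
    using e by (simp add: emeasure_eq_measure ennreal_less_iff)
  finally obtain U where "open U" "B \<subseteq> U" "ennreal (measure M U) < ennreal (measure M B + e)"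
    by (auto simp: INF_less_iff emeasure_eq_measure)
  then show ?thesis using that by (simp add: ennreal_less_iff)
qed

lemma haar_measure_rtransl:
  assumes "haar_prob lam" "E \<in> sets borel"
  shows "measure lam (rtransl E y) = measure lam E"
  using assms unfolding haar_prob_def measure_def by auto

lemma (in finite_measure) measure_Diff_swap:
  assumes "A \<in> sets M" "B \<in> sets M" "measure M A = measure M B"
  shows "measure M (A - B) = measure M (B - A)"
  using assms finite_measure_Diff'[of A B] finite_measure_Diff'[of B A] by (simp add: Int_commute)

lemma (in finite_measure) measure_Int_le_Int_plus_Diff:
  assumes "A \<in> sets M" "X \<in> sets M" "Y \<in> sets M"
  shows "measure M (A \<inter> X) \<le> measure M (A \<inter> Y) + measure M (X - Y)"
proof -
  have "measure M (A \<inter> X) \<le> measure M ((A \<inter> Y) \<union> (X - Y))"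
    using assms by (intro finite_measure_mono) auto
  also have "\<dots> \<le> measure M (A \<inter> Y) + measure M (X - Y)"
    using assms by (intro measure_Un_le) auto
  finally show ?thesis .
qed

lemma haar_measure_rtransl_Diff_small:
  fixes lam :: "'g::{topological_group_add, t2_space} measure"
  assumes lam: "haar_prob lam" and B: "B \<in> sets borel" and e: "e > 0"
  obtains W where "open W" "0 \<in> W" "\<And>d. d \<in> W \<Longrightarrow> measure lam (rtransl B d - B) < e"
proof -
  have reg: "regular_prob lam" using lam unfolding haar_prob_def by blast
  then interpret prob_space lam unfolding regular_prob_def by blast
  have sets_lam: "sets lam = sets borel" using reg unfolding regular_prob_def by blast
  txt \<open>Sandwich \<open>B\<close> between a compact \<open>C\<close> and an open \<open>U\<close> of almost the same measure;
    small translates of \<open>C\<close> stay inside \<open>U\<close>.\<close>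
  have e3: "e/3 > 0" using e by simp
  obtain C where C: "compact C" "C \<subseteq> B" "measure lam B < measure lam C + e/3"
    by (rule regular_prob_inner_compact[OF reg B e3])
  obtain U where U: "open U" "B \<subseteq> U" "measure lam U < measure lam B + e/3"
    by (rule regular_prob_outer_open[OF reg B e3])
  obtain W where W: "open W" "0 \<in> W" "\<And>d. d \<in> W \<Longrightarrow> rtransl C d \<subseteq> U"
    using compact_rtransl_subset_open[OF C(1) U(1) order_trans[OF C(2) U(2)]] by blast
  show ?thesis
  proof (rule that[OF W(1,2)])
    fix d assume d: "d \<in> W"
    have CB: "C \<in> sets lam" "B - C \<in> sets lam" "U \<in> sets lam" "rtransl (B - C) d \<in> sets lam"
      using C(1) B U(1) by (auto simp: sets_lam intro: borel_compact borel_rtransl)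
    have "rtransl B d - B \<subseteq> (U - C) \<union> rtransl (B - C) d"
    proof
      fix z assume z: "z \<in> rtransl B d - B"
      show "z \<in> (U - C) \<union> rtransl (B - C) d"
      proof (cases "z - d \<in> C")
        case True
        then have "z \<in> U" using W(3)[OF d] by (auto simp: mem_rtransl)
        then show ?thesis using z C(2) by auto
      next
        case False
        then show ?thesis using z by (simp add: mem_rtransl)
      qed
    qed
    then have "measure lam (rtransl B d - B) \<le> measure lam ((U - C) \<union> rtransl (B - C) d)"
      using CB by (intro finite_measure_mono) auto
    also have "\<dots> \<le> measure lam (U - C) + measure lam (rtransl (B - C) d)"
      using CB by (intro measure_Un_le) auto
    also have "\<dots> = (measure lam U - measure lam C) + (measure lam B - measure lam C)"
      using CB C(2) U(2) B haar_measure_rtransl[OF lam, of "B - C" d]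
      by (simp add: finite_measure_Diff sets_lam)
    finally show "measure lam (rtransl B d - B) < e"
      using C(3) U(3) by linarith
  qed
qed

lemma continuous_on_haar_measure_Int_rtransl:
  fixes lam :: "'g::{topological_group_add, t2_space} measure"
  assumes lam: "haar_prob lam" and B: "B \<in> sets borel" and B': "B' \<in> sets borel"
  shows "continuous_on UNIV (\<lambda>y. measure lam (B' \<inter> rtransl B y))"
proof (rule continuous_on_UNIV_realI)
  have reg: "regular_prob lam" using lam unfolding haar_prob_def by blast
  then interpret prob_space lam unfolding regular_prob_def by blast
  have sets_lam: "sets lam = sets borel" using reg unfolding regular_prob_def by blast
  fix y0 :: 'g and e :: real assume "e > 0"
  obtain W where W: "open W" "0 \<in> W" "\<And>d. d \<in> W \<Longrightarrow> measure lam (rtransl B d - B) < e"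
    using haar_measure_rtransl_Diff_small[OF lam B \<open>e > 0\<close>] by blast
  have "((\<lambda>y. y - y0) \<longlongrightarrow> y0 - y0) (at y0)"
    by (intro tendsto_intros)
  then have "eventually (\<lambda>y. y - y0 \<in> W) (at y0)"
    using W(1,2) by (intro topological_tendstoD) auto
  then show "eventually (\<lambda>y. \<bar>measure lam (B' \<inter> rtransl B y) - measure lam (B' \<inter> rtransl B y0)\<bar> < e) (at y0)"
  proof eventually_elim
    case (elim y)
    define d where "d = y - y0"
    have Bd: "rtransl B d \<in> sets lam" using B by (simp add: sets_lam borel_rtransl)
    have sets: "rtransl B y \<in> sets lam" "rtransl B y0 \<in> sets lam" "B' \<in> sets lam"
      using B B' by (simp_all add: sets_lam borel_rtransl)
    have By: "rtransl B y = rtransl (rtransl B d) y0"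
      by (simp add: rtransl_rtransl d_def)
    have "measure lam (rtransl B y - rtransl B y0) = measure lam (rtransl B d - B)"
      unfolding By rtransl_Diff[symmetric] using Bd B by (intro haar_measure_rtransl[OF lam]) (simp_all add: sets_lam)
    moreover have "measure lam (rtransl B y0 - rtransl B y) = measure lam (B - rtransl B d)"
      unfolding By rtransl_Diff[symmetric] using Bd B by (intro haar_measure_rtransl[OF lam]) (simp_all add: sets_lam)
    moreover have "measure lam (B - rtransl B d) = measure lam (rtransl B d - B)"
      using Bd B haar_measure_rtransl[OF lam B, of d] by (intro measure_Diff_swap) (simp_all add: sets_lam)
    moreover have "measure lam (rtransl B d - B) < e"
      using W(3) elim d_def by blast
    ultimately show ?case
      using measure_Int_le_Int_plus_Diff[OF sets(3,1,2)] measure_Int_le_Int_plus_Diff[OF sets(3,2,1)]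
      by linarith
  qed
qed

section \<open>The net of finite Borel partitions\<close>

lemma borel_partitionsD:
  assumes "P \<in> borel_partitions"
  shows "finite P" "P \<subseteq> sets borel" "{} \<notin> P" "\<Union>P = UNIV"
    "\<And>E F. E \<in> P \<Longrightarrow> F \<in> P \<Longrightarrow> E \<noteq> F \<Longrightarrow> E \<inter> F = {}"
  using assms unfolding borel_partitions_def by auto

lemma borel_partition_cover: "P \<in> borel_partitions \<Longrightarrow> \<exists>E\<in>P. x \<in> E"
  using borel_partitionsD(4) by blast

lemma refines_trans: "refines R Q \<Longrightarrow> refines Q P \<Longrightarrow> refines R P"
  unfolding refines_def by (meson order_trans)

lemma borel_partitions_common_refinement:
  assumes P: "P \<in> borel_partitions" and Q: "Q \<in> borel_partitions"
  obtains R where "R \<in> borel_partitions" "refines R P" "refines R Q"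
proof
  let ?R = "(\<lambda>(E, F). E \<inter> F) ` (P \<times> Q) - {{}}"
  show "?R \<in> borel_partitions"
    unfolding borel_partitions_def
  proof (intro CollectI conjI)
    show "finite ?R" using borel_partitionsD(1)[OF P] borel_partitionsD(1)[OF Q] by auto
    show "?R \<subseteq> sets borel" using borel_partitionsD(2)[OF P] borel_partitionsD(2)[OF Q] by auto
    show "\<Union>?R = UNIV"
    proof (intro set_eqI iffI UNIV_I)
      fix x :: 'a
      obtain E F where "E \<in> P" "F \<in> Q" "x \<in> E" "x \<in> F"
        using borel_partition_cover[OF P] borel_partition_cover[OF Q] by metis
      then show "x \<in> \<Union>?R" by (auto intro!: bexI[of _ "E \<inter> F"])
    qed
    show "\<forall>E\<in>?R. \<forall>F\<in>?R. E \<noteq> F \<longrightarrow> E \<inter> F = {}"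
      using borel_partitionsD(5)[OF P] borel_partitionsD(5)[OF Q] by blast
  qed auto
  show "refines ?R P" "refines ?R Q"
    unfolding refines_def by auto
qed

lemma eventually_partition_net_refines:
  assumes "P \<in> borel_partitions"
  shows "eventually (\<lambda>Q. Q \<in> borel_partitions \<and> refines Q P) partition_net"
  unfolding partition_net_def
  by (rule eventually_INF1[OF assms]) (simp add: eventually_principal)

lemma UNIV_borel_partition: "{UNIV} \<in> borel_partitions"
  unfolding borel_partitions_def by auto

lemma eventually_partition_net_borel_partitions:
  "eventually (\<lambda>Q. Q \<in> borel_partitions) partition_net"
  using eventually_partition_net_refines[OF UNIV_borel_partition] by (rule eventually_mono) simp

lemma eventually_partition_net_split:
  assumes "B \<in> sets borel"
  shows "eventually (\<lambda>Q. Q \<in> borel_partitions \<and> (\<forall>E\<in>Q. E \<subseteq> B \<or> E \<subseteq> - B)) partition_net"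
proof -
  have "{B, - B} - {{}} \<in> borel_partitions"
    unfolding borel_partitions_def using assms by auto
  from eventually_partition_net_refines[OF this] show ?thesis
    by (rule eventually_mono) (auto simp: refines_def)
qed

lemma partition_net_neq_bot: "partition_net \<noteq> bot"
proof -
  let ?F = "\<lambda>P. principal {Q \<in> borel_partitions. refines Q P}"
  have "\<exists>R\<in>borel_partitions. ?F R \<le> inf (?F P) (?F Q)"
    if PQ: "P \<in> borel_partitions" "Q \<in> borel_partitions" for P Q
  proof -
    obtain R where "R \<in> borel_partitions" "refines R P" "refines R Q"
      using borel_partitions_common_refinement[OF PQ] .
    then show ?thesis by (auto intro!: bexI[of _ R] intro: refines_trans)
  qed
  moreover have "\<not> eventually (\<lambda>_. False) (?F P)" if "P \<in> borel_partitions" for P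
    using that by (auto simp: eventually_principal refines_def)
  ultimately have "\<not> eventually (\<lambda>_. False) partition_net"
    unfolding partition_net_def using UNIV_borel_partition
    by (subst eventually_INF_base) blast+
  then show ?thesis
    by (simp add: trivial_limit_def)
qed

section \<open>Families eventually uniformly close to continuous functions\<close>

definition near_continuous :: "('y::topological_space \<Rightarrow> 'i \<Rightarrow> real) \<Rightarrow> 'i filter \<Rightarrow> bool" where
  "near_continuous g F \<longleftrightarrow>
     (\<forall>e>0. \<exists>T. continuous_on UNIV T \<and> (\<forall>y. eventually (\<lambda>i. \<bar>g y i - T y\<bar> \<le> e) F))"

lemma near_continuousD:
  assumes "near_continuous g F" "e > 0"
  obtains T where "continuous_on UNIV T" "\<And>y. eventually (\<lambda>i. \<bar>g y i - T y\<bar> \<le> e) F"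
  using assms unfolding near_continuous_def by blast

lemma near_continuous_approx:
  assumes "\<And>e. e > 0 \<Longrightarrow> \<exists>g'. near_continuous g' F \<and> (\<forall>y. eventually (\<lambda>i. \<bar>g y i - g' y i\<bar> \<le> e) F)"
  shows "near_continuous g F"
  unfolding near_continuous_def
proof (intro allI impI)
  fix e :: real assume "e > 0"
  then obtain g' where g': "near_continuous g' F" "\<And>y. eventually (\<lambda>i. \<bar>g y i - g' y i\<bar> \<le> e/2) F"
    using assms[of "e/2"] by auto
  obtain T where T: "continuous_on UNIV T" "\<And>y. eventually (\<lambda>i. \<bar>g' y i - T y\<bar> \<le> e/2) F"
    using near_continuousD[OF g'(1)] \<open>e > 0\<close> by (metis half_gt_zero)
  have "eventually (\<lambda>i. \<bar>g y i - T y\<bar> \<le> e) F" for y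
    using g'(2)[of y] T(2)[of y] by eventually_elim linarith
  with T(1) show "\<exists>T. continuous_on UNIV T \<and> (\<forall>y. eventually (\<lambda>i. \<bar>g y i - T y\<bar> \<le> e) F)"
    by blast
qed

lemma near_continuous_const_mult:
  assumes "near_continuous g F"
  shows "near_continuous (\<lambda>y i. c * g y i) F"
  unfolding near_continuous_def
proof (intro allI impI)
  fix e :: real assume "e > 0"
  then obtain T where T: "continuous_on UNIV T" "\<And>y. eventually (\<lambda>i. \<bar>g y i - T y\<bar> \<le> e / (\<bar>c\<bar> + 1)) F"
    using near_continuousD[OF assms, of "e / (\<bar>c\<bar> + 1)"] by (metis abs_ge_zero divide_pos_pos add_nonneg_pos zero_less_one)
  have "\<bar>c * g y i - c * T y\<bar> \<le> e" if "\<bar>g y i - T y\<bar> \<le> e / (\<bar>c\<bar> + 1)" for y i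
  proof -
    have "\<bar>c * g y i - c * T y\<bar> = \<bar>c\<bar> * \<bar>g y i - T y\<bar>"
      by (simp add: abs_mult right_diff_distrib[symmetric])
    also have "\<dots> \<le> \<bar>c\<bar> * (e / (\<bar>c\<bar> + 1))"
      using that by (intro mult_left_mono) auto
    also have "\<dots> \<le> e"
      using \<open>e > 0\<close> by (simp add: field_simps)
    finally show ?thesis .
  qed
  then have "eventually (\<lambda>i. \<bar>c * g y i - c * T y\<bar> \<le> e) F" for y
    using T(2)[of y] by (rule eventually_mono[rotated])
  moreover have "continuous_on UNIV (\<lambda>y. c * T y)"
    using T(1) by (intro continuous_intros)
  ultimately show "\<exists>T. continuous_on UNIV T \<and> (\<forall>y. eventually (\<lambda>i. \<bar>c * g y i - T y\<bar> \<le> e) F)"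
    by blast
qed

lemma near_continuous_add:
  assumes "near_continuous g F" "near_continuous g' F"
  shows "near_continuous (\<lambda>y i. g y i + g' y i) F"
  unfolding near_continuous_def
proof (intro allI impI)
  fix e :: real assume "e > 0"
  obtain T where T: "continuous_on UNIV T" "\<And>y. eventually (\<lambda>i. \<bar>g y i - T y\<bar> \<le> e/2) F"
    using near_continuousD[OF assms(1)] \<open>e > 0\<close> by (metis half_gt_zero)
  obtain T' where T': "continuous_on UNIV T'" "\<And>y. eventually (\<lambda>i. \<bar>g' y i - T' y\<bar> \<le> e/2) F"
    using near_continuousD[OF assms(2)] \<open>e > 0\<close> by (metis half_gt_zero)
  have "eventually (\<lambda>i. \<bar>(g y i + g' y i) - (T y + T' y)\<bar> \<le> e) F" for y
    using T(2)[of y] T'(2)[of y] by eventually_elim linarith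
  moreover have "continuous_on UNIV (\<lambda>y. T y + T' y)"
    using T(1) T'(1) by (intro continuous_intros)
  ultimately show "\<exists>T. continuous_on UNIV T \<and> (\<forall>y. eventually (\<lambda>i. \<bar>g y i + g' y i - T y\<bar> \<le> e) F)"
    by blast
qed

lemma near_continuous_sum:
  assumes "finite K" "\<And>k. k \<in> K \<Longrightarrow> near_continuous (g k) F"
  shows "near_continuous (\<lambda>y i. \<Sum>k\<in>K. g k y i) F"
  using assms
proof (induction K rule: finite_induct)
  case empty
  show ?case
    unfolding near_continuous_def by (intro allI impI exI[of _ "\<lambda>_. 0"]) auto
next
  case (insert k K)
  then show ?case by (simp add: near_continuous_add)
qed

lemma continuous_on_limit_near_continuous:
  assumes F: "F \<noteq> bot" and g: "near_continuous g F" and lim: "\<And>y. (g y \<longlongrightarrow> L y) F"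
  shows "continuous_on UNIV L"
proof (rule continuous_on_UNIV_realI)
  fix y0 and e :: real assume "e > 0"
  obtain T where T: "continuous_on UNIV T" "\<And>y. eventually (\<lambda>i. \<bar>g y i - T y\<bar> \<le> e/4) F"
    using near_continuousD[OF g, of "e/4"] \<open>e > 0\<close> by auto
  have LT: "\<bar>L y - T y\<bar> \<le> e/4" for y
  proof (rule tendsto_upperbound)
    show "((\<lambda>i. \<bar>g y i - T y\<bar>) \<longlongrightarrow> \<bar>L y - T y\<bar>) F"
      by (intro tendsto_intros lim)
  qed (use T(2) F in auto)
  have "(T \<longlongrightarrow> T y0) (at y0)"
    using T(1) unfolding continuous_on_def by simp
  then have "eventually (\<lambda>y. dist (T y) (T y0) < e/2) (at y0)"
    using \<open>e > 0\<close> tendsto_iff half_gt_zero by blast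
  then show "eventually (\<lambda>y. \<bar>L y - L y0\<bar> < e) (at y0)"
  proof eventually_elim
    case (elim y)
    then show ?case using LT[of y] LT[of y0] unfolding dist_real_def by linarith
  qed
qed

section \<open>Step functions on Borel rectangles\<close>

lemma atoms_borel_partition:
  assumes "finite C" "\<And>z. z \<in> C \<Longrightarrow> V z \<in> sets borel"
  shows "range (\<lambda>a. {a'. \<forall>z\<in>C. a' \<in> V z \<longleftrightarrow> a \<in> V z}) \<in> borel_partitions"
    (is "range ?A \<in> _")
proof -
  let ?atom = "\<lambda>S. {a'. \<forall>z\<in>C. a' \<in> V z \<longleftrightarrow> z \<in> S}"
  have atom: "?A a = ?atom {z\<in>C. a \<in> V z}" for a
    by auto
  have sub: "range ?A \<subseteq> ?atom ` Pow C"
  proof (rule image_subsetI)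
    show "?A a \<in> ?atom ` Pow C" for a
      unfolding atom by (rule imageI) auto
  qed
  have atom_borel: "?atom S \<in> sets borel" for S
  proof -
    have "?atom S = {a' \<in> space borel. \<forall>z\<in>C. a' \<in> (if z \<in> S then V z else - V z)}"
      by auto
    also have "\<dots> \<in> sets borel"
      using assms by (intro sets.sets_Collect_finite_All) auto
    finally show ?thesis .
  qed
  have "range ?A \<subseteq> sets borel"
    by (rule order_trans[OF sub image_subsetI[OF atom_borel]])
  moreover have "finite (range ?A)"
    using finite_subset[OF sub] assms(1) by simp
  moreover have "?A a = ?A b" if "x \<in> ?A a" "x \<in> ?A b" for a b x
    using that by auto
  ultimately show ?thesis
    unfolding borel_partitions_def by blast
qed

text \<open>The partitions are the atoms of the projections of a finite cover of the compact space
  by open rectangles on each of which \<open>h\<close> oscillates by less than \<open>e\<close>.\<close>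
lemma compact_product_fine_rectangular_partition:
  fixes h :: "'a::topological_space \<times> 'b::topological_space \<Rightarrow> real"
  assumes cpt: "compact (UNIV :: ('a \<times> 'b) set)" and h: "continuous_on UNIV h" and e: "e > 0"
  obtains P Q where "P \<in> borel_partitions" "Q \<in> borel_partitions"
    "\<And>A B z z'. A \<in> P \<Longrightarrow> B \<in> Q \<Longrightarrow> z \<in> A \<times> B \<Longrightarrow> z' \<in> A \<times> B \<Longrightarrow> \<bar>h z - h z'\<bar> \<le> e"
proof -
  define U where "U w = h -` ball (h w) (e/2)" for w
  have U: "open (U w)" "w \<in> U w" for w
    unfolding U_def using h e by (auto intro: open_vimage)
  have "\<forall>w. \<exists>V W. open V \<and> open W \<and> w \<in> V \<times> W \<and> V \<times> W \<subseteq> U w"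
  proof
    show "\<exists>V W. open V \<and> open W \<and> w \<in> V \<times> W \<and> V \<times> W \<subseteq> U w" for w
      using open_prod_elim[OF U] by metis
  qed
  then obtain V W where VW: "\<And>w. open (V w) \<and> open (W w) \<and> w \<in> V w \<times> W w \<and> V w \<times> W w \<subseteq> U w"
    by metis
  have cover: "UNIV \<subseteq> (\<Union>w\<in>UNIV. V w \<times> W w)"
    using VW by blast
  have opn: "open (V w \<times> W w)" if "w \<in> UNIV" for w
    using VW by (simp add: open_Times)
  obtain C where C: "C \<subseteq> UNIV" "finite C" "UNIV \<subseteq> (\<Union>w\<in>C. V w \<times> W w)"
    by (rule compactE_image[OF cpt opn cover])
  let ?P = "range (\<lambda>a. {a'. \<forall>w\<in>C. a' \<in> V w \<longleftrightarrow> a \<in> V w})"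
  let ?Q = "range (\<lambda>b. {b'. \<forall>w\<in>C. b' \<in> W w \<longleftrightarrow> b \<in> W w})"
  show ?thesis
  proof
    show "?P \<in> borel_partitions" "?Q \<in> borel_partitions"
      using C(2) VW by (auto intro!: atoms_borel_partition borel_open)
    fix A B z z' assume "A \<in> ?P" "B \<in> ?Q" and zz': "z \<in> A \<times> B" "z' \<in> A \<times> B"
    then obtain a b where A: "A = {a'. \<forall>w\<in>C. a' \<in> V w \<longleftrightarrow> a \<in> V w}"
      and B: "B = {b'. \<forall>w\<in>C. b' \<in> W w \<longleftrightarrow> b \<in> W w}" by blast
    obtain w where "w \<in> C" "(a, b) \<in> V w \<times> W w" using C(3) by blast
    then have "A \<times> B \<subseteq> U w" using VW[of w] unfolding A B by auto
    then have "\<bar>h z - h w\<bar> < e/2" "\<bar>h z' - h w\<bar> < e/2"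
      using zz' unfolding U_def by (auto simp: dist_real_def abs_minus_commute)
    then show "\<bar>h z - h z'\<bar> \<le> e" by linarith
  qed
qed

lemma rectangle_step_function_approx:
  fixes h :: "'a::topological_space \<times> 'b::topological_space \<Rightarrow> real"
  assumes P: "P \<in> borel_partitions" and Q: "Q \<in> borel_partitions"
    and osc: "\<And>A B z z'. A \<in> P \<Longrightarrow> B \<in> Q \<Longrightarrow> z \<in> A \<times> B \<Longrightarrow> z' \<in> A \<times> B \<Longrightarrow> \<bar>h z - h z'\<bar> \<le> e"
  shows "\<bar>h z - (\<Sum>(A, B)\<in>P \<times> Q. h (SOME z'. z' \<in> A \<times> B) * indicator (A \<times> B) z)\<bar> \<le> e"
proof -
  obtain a b where z: "z = (a, b)" by fastforce
  obtain A B where AB: "A \<in> P" "a \<in> A" "B \<in> Q" "b \<in> B"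
    using borel_partition_cover[OF P] borel_partition_cover[OF Q] by metis
  have ind: "indicator (A' \<times> B') z = (if (A', B') = (A, B) then 1 else 0 :: real)"
    if "A' \<in> P" "B' \<in> Q" for A' B'
    using that AB borel_partitionsD(5)[OF P, of A A'] borel_partitionsD(5)[OF Q, of B B']
    by (auto simp: z indicator_def)
  have "(\<Sum>(A', B')\<in>P \<times> Q. h (SOME z'. z' \<in> A' \<times> B') * indicator (A' \<times> B') z)
      = (\<Sum>R\<in>P \<times> Q. if R = (A, B) then h (SOME z'. z' \<in> A \<times> B) else 0)"
    by (intro sum.cong refl) (auto simp: ind AB split: if_split_asm)
  also have "\<dots> = h (SOME z'. z' \<in> A \<times> B)"
    using AB borel_partitionsD(1)[OF P] borel_partitionsD(1)[OF Q] by simp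
  finally show ?thesis
    using osc[OF AB(1,3)] someI[of "\<lambda>z'. z' \<in> A \<times> B" z] AB by (simp add: z)
qed

lemma (in subprob_space) abs_integral_le_bound:
  fixes f :: "'a \<Rightarrow> real"
  assumes f: "f \<in> borel_measurable M" and bound: "\<And>x. x \<in> space M \<Longrightarrow> \<bar>f x\<bar> \<le> B"
  shows "\<bar>integral\<^sup>L M f\<bar> \<le> B"
proof -
  obtain x where "x \<in> space M" using subprob_not_empty by blast
  then have "0 \<le> B" using bound[of x] by linarith
  have "integrable M (\<lambda>x. \<bar>f x\<bar>)"
    using f bound by (intro integrable_const_bound[where B=B]) auto
  then have "integral\<^sup>L M (\<lambda>x. \<bar>f x\<bar>) \<le> integral\<^sup>L M (\<lambda>_. B)"
    using bound by (intro integral_mono) auto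
  then have "\<bar>integral\<^sup>L M f\<bar> \<le> integral\<^sup>L M (\<lambda>_. B)"
    using integral_abs_bound[of M f] by linarith
  also have "\<dots> = measure M (space M) * B"
    by simp
  also have "\<dots> \<le> B"
    using \<open>0 \<le> B\<close> subprob_measure_le_1 by (simp add: mult_left_le_one_le)
  finally show ?thesis .
qed

lemma integrable_continuous_on_compact:
  fixes h :: "'a::topological_space \<Rightarrow> real"
  assumes "finite_measure M" and sets: "sets M = sets borel"
    and cpt: "compact (UNIV :: 'a set)" and h: "continuous_on UNIV h"
  shows "integrable M h"
proof -
  interpret finite_measure M by fact
  have "bounded (range h)"
    using compact_continuous_image[OF h cpt] by (rule compact_imp_bounded)
  then obtain B where "\<And>z. \<bar>h z\<bar> \<le> B"
    by (auto simp: bounded_iff)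
  moreover have "h \<in> borel_measurable M"
    using borel_measurable_continuous_onI[OF h] by (simp add: measurable_cong_sets[OF sets refl])
  ultimately show ?thesis
    by (intro integrable_const_bound[where B=B]) auto
qed

lemma (in finite_measure) integral_step_function:
  fixes c :: "'i \<Rightarrow> real"
  assumes "finite I" "\<And>i. i \<in> I \<Longrightarrow> S i \<in> sets M"
  shows "integrable M (\<lambda>z. \<Sum>i\<in>I. c i * indicator (S i) z)"
    and "integral\<^sup>L M (\<lambda>z. \<Sum>i\<in>I. c i * indicator (S i) z) = (\<Sum>i\<in>I. c i * measure M (S i))"
proof -
  have int: "integrable M (\<lambda>z. c i * indicator (S i) z :: real)" if "i \<in> I" for i
    using assms(2)[OF that] by (intro Bochner_Integration.integrable_mult_right integrable_real_indicator)
      (auto simp: less_top[symmetric])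
  then show "integrable M (\<lambda>z. \<Sum>i\<in>I. c i * indicator (S i) z)"
    by (rule Bochner_Integration.integrable_sum)
  show "integral\<^sup>L M (\<lambda>z. \<Sum>i\<in>I. c i * indicator (S i) z) = (\<Sum>i\<in>I. c i * measure M (S i))"
    using int assms(2) by (simp add: Bochner_Integration.integral_sum Int_absorb2 sets.sets_into_space)
qed

lemma (in finite_measure) sum_measure_Int_disjoint_family:
  assumes "finite I" "disjoint_family_on X I" "\<And>i. i \<in> I \<Longrightarrow> X i \<in> sets M" "A \<in> sets M"
  shows "(\<Sum>i\<in>I. measure M (A \<inter> X i)) = measure M (A \<inter> (\<Union>i\<in>I. X i))"
proof -
  have "disjoint_family_on (\<lambda>i. A \<inter> X i) I"
    using assms(2) unfolding disjoint_family_on_def by blast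
  then have "measure M (\<Union>i\<in>I. A \<inter> X i) = (\<Sum>i\<in>I. measure M (A \<inter> X i))"
    using assms(1,3,4) by (intro finite_measure_finite_Union) auto
  then show ?thesis
    by (simp only: Int_UN_distrib)
qed

section \<open>The measures \<open>\<mu>\<^sub>y\<^sub>,\<^sub>\<E>\<close>\<close>

definition preimage_dense :: "'a::topological_space measure \<Rightarrow> ('a \<Rightarrow> 'g::topological_space) \<Rightarrow> bool" where
  "preimage_dense mu f \<longleftrightarrow>
     (\<forall>e>0. \<forall>A\<in>sets borel. \<exists>B\<in>sets (borel :: 'g measure). measure mu (sym_diff A (f -` B)) < e)"

locale shifted_joining =
  fixes lam :: "'g::{topological_group_add, t2_space} measure"
    and f1 :: "'a::topological_space \<Rightarrow> 'g" and f2 :: "'b::topological_space \<Rightarrow> 'g"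
    and mu1 :: "'a measure" and mu2 :: "'b measure"
    and nu :: "('a \<times> 'b) measure"
  assumes haar: "haar_prob lam"
    and continuous_f1: "continuous_on UNIV f1" and continuous_f2: "continuous_on UNIV f2"
    and regular_mu1: "regular_prob mu1" and regular_mu2: "regular_prob mu2"
    and distr_mu1: "distr mu1 borel f1 = lam" and distr_mu2: "distr mu2 borel f2 = lam"
    and regular_nu: "regular_prob nu"
    and nu_eq_pair_measure: "\<forall>D\<in>sets (mu1 \<Otimes>\<^sub>M mu2). emeasure nu D = emeasure (mu1 \<Otimes>\<^sub>M mu2) D"
begin

lemma sets_lam [simp]: "sets lam = sets borel" and space_lam [simp]: "space lam = UNIV"
  and prob_space_lam: "prob_space lam"
  using haar unfolding haar_prob_def regular_prob_def by (auto dest: sets_eq_imp_space_eq)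

lemma sets_mu1 [simp]: "sets mu1 = sets borel" and space_mu1 [simp]: "space mu1 = UNIV"
  and prob_space_mu1: "prob_space mu1"
  using regular_mu1 unfolding regular_prob_def by (auto dest: sets_eq_imp_space_eq)

lemma sets_mu2 [simp]: "sets mu2 = sets borel" and space_mu2 [simp]: "space mu2 = UNIV"
  and prob_space_mu2: "prob_space mu2"
  using regular_mu2 unfolding regular_prob_def by (auto dest: sets_eq_imp_space_eq)

lemma sets_nu [simp]: "sets nu = sets borel" and space_nu [simp]: "space nu = UNIV"
  and prob_space_nu: "prob_space nu"
  using regular_nu unfolding regular_prob_def by (auto dest: sets_eq_imp_space_eq)

sublocale lam: prob_space lam by (rule prob_space_lam)
sublocale mu1: prob_space mu1 by (rule prob_space_mu1)
sublocale mu2: prob_space mu2 by (rule prob_space_mu2)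
sublocale nu: prob_space nu by (rule prob_space_nu)

lemma borel_vimage_f1: "E \<in> sets borel \<Longrightarrow> f1 -` E \<in> sets borel"
  using measurable_sets_borel[OF borel_measurable_continuous_onI[OF continuous_f1]] .

lemma borel_vimage_f2: "E \<in> sets borel \<Longrightarrow> f2 -` E \<in> sets borel"
  using measurable_sets_borel[OF borel_measurable_continuous_onI[OF continuous_f2]] .

lemma measure_vimage_f1:
  assumes "E \<in> sets borel" shows "measure mu1 (f1 -` E) = measure lam E"
proof -
  have "f1 \<in> measurable mu1 borel"
    unfolding measurable_cong_sets[OF sets_mu1 refl] by (rule borel_measurable_continuous_onI[OF continuous_f1])
  then show ?thesis
    using measure_distr[of f1 mu1 borel E] assms by (simp add: distr_mu1)
qed

lemma measure_vimage_f2: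
  assumes "E \<in> sets borel" shows "measure mu2 (f2 -` E) = measure lam E"
proof -
  have "f2 \<in> measurable mu2 borel"
    unfolding measurable_cong_sets[OF sets_mu2 refl] by (rule borel_measurable_continuous_onI[OF continuous_f2])
  then show ?thesis
    using measure_distr[of f2 mu2 borel E] assms by (simp add: distr_mu2)
qed

lemma measure_nu_Times:
  assumes "A \<in> sets borel" "B \<in> sets borel"
  shows "measure nu (A \<times> B) = measure mu1 A * measure mu2 B"
proof -
  have "A \<times> B \<in> sets (mu1 \<Otimes>\<^sub>M mu2)"
    using assms by (intro pair_measureI) auto
  then have "emeasure nu (A \<times> B) = emeasure mu1 A * emeasure mu2 B"
    using nu_eq_pair_measure mu2.emeasure_pair_measure_Times[of A mu1 B] assms by simp
  then have "ennreal (measure nu (A \<times> B)) = ennreal (measure mu1 A * measure mu2 B)"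
    by (simp add: nu.emeasure_eq_measure mu1.emeasure_eq_measure mu2.emeasure_eq_measure ennreal_mult)
  then show ?thesis
    by (simp add: zero_le_mult_iff)
qed

definition cell_rect :: "'g \<Rightarrow> 'g set \<Rightarrow> ('a \<times> 'b) set" where
  "cell_rect y E = f1 -` E \<times> f2 -` rtransl E y"

lemma borel_cell_rect: "E \<in> sets borel \<Longrightarrow> cell_rect y E \<in> sets borel"
  unfolding cell_rect_def by (intro borel_Times borel_vimage_f1 borel_vimage_f2 borel_rtransl)

abbreviation joining :: "'g \<Rightarrow> 'g set set \<Rightarrow> ('a \<times> 'b) measure" where
  "joining y P \<equiv> mu_yE lam f1 f2 nu y P"

abbreviation charged :: "'g set set \<Rightarrow> 'g set set" where
  "charged P \<equiv> {E\<in>P. measure lam E > 0}"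

lemma sets_joining [simp]: "sets (joining y P) = sets borel"
  and space_joining [simp]: "space (joining y P) = UNIV"
  unfolding mu_yE_def by (simp_all add: sets_measure_of_conv sets.sigma_sets_eq[of borel, simplified])

lemma emeasure_joining:
  assumes P: "P \<in> borel_partitions" and D: "D \<in> sets borel"
  shows "emeasure (joining y P) D = (\<Sum>E\<in>charged P. emeasure nu (D \<inter> cell_rect y E) / emeasure lam E)"
proof -
  let ?m = "\<lambda>D. \<Sum>E\<in>charged P. emeasure nu (D \<inter> cell_rect y E) / emeasure lam E"
  have cells: "E \<in> P \<Longrightarrow> cell_rect y E \<in> sets borel" for E
    using borel_partitionsD(2)[OF P] by (auto intro: borel_cell_rect)
  have "countably_additive (sets borel) ?m"
    unfolding countably_additive_def
  proof (intro allI impI)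
    fix A :: "nat \<Rightarrow> ('a \<times> 'b) set"
    assume A: "range A \<subseteq> sets borel" "disjoint_family A" "\<Union> (range A) \<in> sets borel"
    have "(\<Sum>i. ?m (A i)) = (\<Sum>E\<in>charged P. (\<Sum>i. emeasure nu (A i \<inter> cell_rect y E)) / emeasure lam E)"
      by (subst suminf_sum) (auto intro: summableI simp: divide_ennreal_def ennreal_suminf_multc)
    also have "\<dots> = ?m (\<Union> (range A))"
    proof (rule sum.cong[OF refl])
      fix E assume "E \<in> charged P"
      then have "(\<Sum>i. emeasure nu (A i \<inter> cell_rect y E)) = emeasure nu (\<Union>i. A i \<inter> cell_rect y E)"
        using A cells by (intro suminf_emeasure) (auto simp: disjoint_family_on_def)
      then show "(\<Sum>i. emeasure nu (A i \<inter> cell_rect y E)) / emeasure lam E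
          = emeasure nu (\<Union> (range A) \<inter> cell_rect y E) / emeasure lam E"
        by simp
    qed
    finally show "(\<Sum>i. ?m (A i)) = ?m (\<Union> (range A))" .
  qed
  moreover have "positive (sets borel) ?m"
    unfolding positive_def by simp
  ultimately have "emeasure (measure_of UNIV (sets borel) ?m) D = ?m D"
    using sets.sigma_algebra_axioms[of borel] D by (intro emeasure_measure_of_sigma) auto
  then show ?thesis
    unfolding mu_yE_def cell_rect_def .
qed

lemma emeasure_joining_eq_measure:
  assumes P: "P \<in> borel_partitions" and D: "D \<in> sets borel"
  shows "emeasure (joining y P) D = ennreal (measure (joining y P) D)"
    and "measure (joining y P) D = (\<Sum>E\<in>charged P. measure nu (D \<inter> cell_rect y E) / measure lam E)"
proof -
  have "emeasure (joining y P) D = (\<Sum>E\<in>charged P. ennreal (measure nu (D \<inter> cell_rect y E) / measure lam E))"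
    unfolding emeasure_joining[OF assms] nu.emeasure_eq_measure lam.emeasure_eq_measure
    by (intro sum.cong refl divide_ennreal) auto
  also have "\<dots> = ennreal (\<Sum>E\<in>charged P. measure nu (D \<inter> cell_rect y E) / measure lam E)"
    by (intro sum_ennreal) auto
  finally have *: "emeasure (joining y P) D = ennreal (\<Sum>E\<in>charged P. measure nu (D \<inter> cell_rect y E) / measure lam E)" .
  then show "measure (joining y P) D = (\<Sum>E\<in>charged P. measure nu (D \<inter> cell_rect y E) / measure lam E)"
    unfolding measure_def by (simp add: sum_nonneg)
  with * show "emeasure (joining y P) D = ennreal (measure (joining y P) D)"
    by simp
qed

lemma measure_joining_Times:
  assumes P: "P \<in> borel_partitions" and A: "A \<in> sets borel" and B: "B \<in> sets borel"
  shows "measure (joining y P) (A \<times> B)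
    = (\<Sum>E\<in>charged P. measure mu1 (A \<inter> f1 -` E) * measure mu2 (B \<inter> f2 -` rtransl E y) / measure lam E)"
  unfolding emeasure_joining_eq_measure(2)[OF P borel_Times[OF A B]]
proof (rule sum.cong[OF refl])
  fix E assume "E \<in> charged P"
  then have "E \<in> sets borel" using borel_partitionsD(2)[OF P] by auto
  have "(A \<times> B) \<inter> cell_rect y E = (A \<inter> f1 -` E) \<times> (B \<inter> f2 -` rtransl E y)"
    unfolding cell_rect_def by (simp add: Times_Int_Times)
  moreover have "measure nu ((A \<inter> f1 -` E) \<times> (B \<inter> f2 -` rtransl E y))
      = measure mu1 (A \<inter> f1 -` E) * measure mu2 (B \<inter> f2 -` rtransl E y)"
    using A B \<open>E \<in> sets borel\<close> by (intro measure_nu_Times sets.Int borel_vimage_f1 borel_vimage_f2 borel_rtransl)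
  ultimately show "measure nu ((A \<times> B) \<inter> cell_rect y E) / measure lam E
      = measure mu1 (A \<inter> f1 -` E) * measure mu2 (B \<inter> f2 -` rtransl E y) / measure lam E"
    by simp
qed

lemma disjoint_family_on_vimage_cells:
  assumes "P \<in> borel_partitions"
  shows "disjoint_family_on (\<lambda>E. f1 -` E) P" and "disjoint_family_on (\<lambda>E. f2 -` rtransl E y) P"
proof -
  have "E \<inter> F = {}" if "E \<in> P" "F \<in> P" "E \<noteq> F" for E F
    using borel_partitionsD(5)[OF assms that] .
  then show "disjoint_family_on (\<lambda>E. f1 -` E) P" "disjoint_family_on (\<lambda>E. f2 -` rtransl E y) P"
    unfolding disjoint_family_on_def by (simp_all add: disjoint_rtransl flip: vimage_Int)
qed

lemma measure_joining_Times_UNIV_le: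
  assumes P: "P \<in> borel_partitions" and A: "A \<in> sets borel"
  shows "measure (joining y P) (A \<times> UNIV) \<le> measure mu1 A"
proof -
  have cells: "E \<in> charged P \<Longrightarrow> E \<in> sets borel" for E
    using borel_partitionsD(2)[OF P] by auto
  have "measure (joining y P) (A \<times> UNIV) = (\<Sum>E\<in>charged P. measure mu1 (A \<inter> f1 -` E))"
    unfolding measure_joining_Times[OF P A space_in_borel]
    using cells by (intro sum.cong refl)
      (simp add: measure_vimage_f2 borel_rtransl haar_measure_rtransl[OF haar])
  also have "\<dots> = measure mu1 (A \<inter> (\<Union>E\<in>charged P. f1 -` E))"
    using A cells borel_partitionsD(1)[OF P] disjoint_family_on_mono[OF _ disjoint_family_on_vimage_cells(1)[OF P]]
    by (intro mu1.sum_measure_Int_disjoint_family) (auto intro: borel_vimage_f1)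
  also have "\<dots> \<le> measure mu1 A"
    using A by (intro mu1.finite_measure_mono) auto
  finally show ?thesis .
qed

lemma measure_joining_UNIV_Times_le:
  assumes P: "P \<in> borel_partitions" and B: "B \<in> sets borel"
  shows "measure (joining y P) (UNIV \<times> B) \<le> measure mu2 B"
proof -
  have cells: "E \<in> charged P \<Longrightarrow> E \<in> sets borel" for E
    using borel_partitionsD(2)[OF P] by auto
  have "measure (joining y P) (UNIV \<times> B) = (\<Sum>E\<in>charged P. measure mu2 (B \<inter> f2 -` rtransl E y))"
    unfolding measure_joining_Times[OF P space_in_borel B]
    using cells by (intro sum.cong refl) (simp add: measure_vimage_f1)
  also have "\<dots> = measure mu2 (B \<inter> (\<Union>E\<in>charged P. f2 -` rtransl E y))"
    using B cells borel_partitionsD(1)[OF P] disjoint_family_on_mono[OF _ disjoint_family_on_vimage_cells(2)[OF P]]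
    by (intro mu2.sum_measure_Int_disjoint_family) (auto intro: borel_vimage_f2 borel_rtransl)
  also have "\<dots> \<le> measure mu2 B"
    using B by (intro mu2.finite_measure_mono) auto
  finally show ?thesis .
qed

lemma subprob_space_joining:
  assumes P: "P \<in> borel_partitions"
  shows "subprob_space (joining y P)"
proof
  have "measure (joining y P) (UNIV \<times> UNIV) \<le> 1"
    using measure_joining_Times_UNIV_le[OF P space_in_borel, of y] mu1.prob_le_1[of UNIV]
    by linarith
  then show "emeasure (joining y P) (space (joining y P)) \<le> 1"
    using emeasure_joining_eq_measure(1)[OF P space_in_borel] by simp
qed simp

lemma measure_joining_vimage_Times:
  assumes P: "P \<in> borel_partitions" and split: "\<forall>E\<in>P. E \<subseteq> B \<or> E \<subseteq> - B"
    and B: "B \<in> sets borel" and B': "B' \<in> sets borel"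
  shows "measure (joining y P) (f1 -` B \<times> f2 -` B') = measure lam (B' \<inter> rtransl B y)"
proof -
  have cells: "E \<in> P \<Longrightarrow> E \<in> sets borel" for E
    using borel_partitionsD(2)[OF P] by auto
  have charged_term: "measure mu1 (f1 -` B \<inter> f1 -` E) * measure mu2 (f2 -` B' \<inter> f2 -` rtransl E y) / measure lam E
      = measure lam (B' \<inter> rtransl (B \<inter> E) y)" if E: "E \<in> charged P" for E
  proof -
    have "measure mu2 (f2 -` B' \<inter> f2 -` rtransl E y) = measure lam (B' \<inter> rtransl E y)"
      using measure_vimage_f2[of "B' \<inter> rtransl E y"] B' borel_rtransl[OF cells, of E y] E
      by (simp flip: vimage_Int)
    moreover have "E \<subseteq> B \<or> E \<inter> B = {}"
      using split E by blast
    ultimately show ?thesis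
      using E cells[of E] by (auto simp: measure_vimage_f1 Int_absorb1 Int_commute simp flip: vimage_Int)
  qed
  have null_term: "measure lam (B' \<inter> rtransl (B \<inter> E) y) = 0" if E: "E \<in> P - charged P" for E
  proof -
    have "measure lam (B' \<inter> rtransl (B \<inter> E) y) \<le> measure lam (rtransl E y)"
      using B B' E cells[of E] by (intro lam.finite_measure_mono) (auto simp: mem_rtransl borel_rtransl)
    also have "\<dots> = 0"
      using E cells[of E] haar_measure_rtransl[OF haar] measure_nonneg[of lam E] by auto
    finally show ?thesis
      using measure_nonneg[of lam "B' \<inter> rtransl (B \<inter> E) y"] by linarith
  qed
  have "measure (joining y P) (f1 -` B \<times> f2 -` B') = (\<Sum>E\<in>charged P. measure lam (B' \<inter> rtransl (B \<inter> E) y))"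
    unfolding measure_joining_Times[OF P borel_vimage_f1[OF B] borel_vimage_f2[OF B']]
    using charged_term by (rule sum.cong[OF refl])
  also have "\<dots> = (\<Sum>E\<in>P. measure lam (B' \<inter> rtransl (B \<inter> E) y))"
    using borel_partitionsD(1)[OF P] null_term by (intro sum.mono_neutral_left) auto
  also have "\<dots> = measure lam (B' \<inter> (\<Union>E\<in>P. rtransl (B \<inter> E) y))"
  proof (rule lam.sum_measure_Int_disjoint_family)
    show "disjoint_family_on (\<lambda>E. rtransl (B \<inter> E) y) P"
      using borel_partitionsD(5)[OF P] unfolding disjoint_family_on_def
      by (metis disjoint_rtransl inf_assoc inf_bot_right inf_left_commute)
  qed (use borel_partitionsD(1)[OF P] B B' cells in \<open>auto intro: borel_rtransl\<close>)
  also have "(\<Union>E\<in>P. rtransl (B \<inter> E) y) = rtransl B y"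
    using borel_partition_cover[OF P] by (auto simp: mem_rtransl)
  finally show ?thesis .
qed

lemma measure_joining_Times_le_perturb:
  assumes P: "P \<in> borel_partitions"
    and A: "A \<in> sets borel" "A' \<in> sets borel" and B: "B \<in> sets borel" "B' \<in> sets borel"
    and X: "X \<in> sets borel" and Y: "Y \<in> sets borel"
    and sub: "A \<times> A' \<subseteq> B \<times> B' \<union> X \<times> UNIV \<union> UNIV \<times> Y"
  shows "measure (joining y P) (A \<times> A') \<le> measure (joining y P) (B \<times> B') + measure mu1 X + measure mu2 Y"
proof -
  interpret subprob_space "joining y P" by (rule subprob_space_joining[OF P])
  have sets: "B \<times> B' \<in> sets borel" "X \<times> UNIV \<in> sets borel" "UNIV \<times> Y \<in> sets borel"
    using B X Y by (simp_all add: borel_Times)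
  have "measure (joining y P) (A \<times> A') \<le> measure (joining y P) (B \<times> B' \<union> X \<times> UNIV \<union> UNIV \<times> Y)"
    using sub sets by (intro finite_measure_mono) auto
  also have "\<dots> \<le> measure (joining y P) (B \<times> B' \<union> X \<times> UNIV) + measure (joining y P) (UNIV \<times> Y)"
    using sets by (intro measure_Un_le) auto
  also have "\<dots> \<le> measure (joining y P) (B \<times> B') + measure (joining y P) (X \<times> UNIV) + measure (joining y P) (UNIV \<times> Y)"
    using sets measure_Un_le[of "B \<times> B'" "joining y P" "X \<times> UNIV"] by simp
  finally show ?thesis
    using measure_joining_Times_UNIV_le[OF P X, of y] measure_joining_UNIV_Times_le[OF P Y, of y] by linarith
qed

lemma near_continuous_joining_Times:
  assumes dense1: "preimage_dense mu1 f1" and dense2: "preimage_dense mu2 f2"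
    and A: "A \<in> sets borel" and A': "A' \<in> sets borel"
  shows "near_continuous (\<lambda>y P. measure (joining y P) (A \<times> A')) partition_net"
  unfolding near_continuous_def
proof (intro allI impI)
  fix e :: real assume "e > 0"
  obtain B where B: "B \<in> sets borel" "measure mu1 ((A - f1 -` B) \<union> (f1 -` B - A)) < e/2"
    using dense1 A \<open>e > 0\<close> unfolding preimage_dense_def by (meson half_gt_zero)
  obtain B' where B': "B' \<in> sets borel" "measure mu2 ((A' - f2 -` B') \<union> (f2 -` B' - A')) < e/2"
    using dense2 A' \<open>e > 0\<close> unfolding preimage_dense_def by (meson half_gt_zero)
  define X where "X = (A - f1 -` B) \<union> (f1 -` B - A)"
  define Y where "Y = (A' - f2 -` B') \<union> (f2 -` B' - A')"
  have XY: "X \<in> sets borel" "Y \<in> sets borel"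
    unfolding X_def Y_def using A A' borel_vimage_f1[OF B(1)] borel_vimage_f2[OF B'(1)] by auto
  have "eventually (\<lambda>P. \<bar>measure (joining y P) (A \<times> A') - measure lam (B' \<inter> rtransl B y)\<bar> \<le> e) partition_net"
    for y
    using eventually_partition_net_split[OF B(1)]
  proof eventually_elim
    case (elim P)
    then have P: "P \<in> borel_partitions" by blast
    have "measure (joining y P) (f1 -` B \<times> f2 -` B') = measure lam (B' \<inter> rtransl B y)"
      using measure_joining_vimage_Times[OF P _ B(1) B'(1)] elim by blast
    moreover have "measure (joining y P) (A \<times> A') \<le> measure (joining y P) (f1 -` B \<times> f2 -` B') + measure mu1 X + measure mu2 Y"
      using A A' borel_vimage_f1[OF B(1)] borel_vimage_f2[OF B'(1)] XY
      by (intro measure_joining_Times_le_perturb[OF P]) (auto simp: X_def Y_def)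
    moreover have "measure (joining y P) (f1 -` B \<times> f2 -` B') \<le> measure (joining y P) (A \<times> A') + measure mu1 X + measure mu2 Y"
      using A A' borel_vimage_f1[OF B(1)] borel_vimage_f2[OF B'(1)] XY
      by (intro measure_joining_Times_le_perturb[OF P]) (auto simp: X_def Y_def)
    ultimately show ?case
      using B(2) B'(2) unfolding X_def[symmetric] Y_def[symmetric] by linarith
  qed
  moreover have "continuous_on UNIV (\<lambda>y. measure lam (B' \<inter> rtransl B y))"
    by (rule continuous_on_haar_measure_Int_rtransl[OF haar B(1) B'(1)])
  ultimately show "\<exists>T. continuous_on UNIV T \<and>
      (\<forall>y. eventually (\<lambda>P. \<bar>measure (joining y P) (A \<times> A') - T y\<bar> \<le> e) partition_net)"
    by blast
qed

lemma abs_integral_joining_minus_step_le: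
  assumes cpt: "compact (UNIV :: ('a \<times> 'b) set)" and h: "continuous_on UNIV h"
    and P: "P \<in> borel_partitions" and PQ: "P0 \<in> borel_partitions" "Q0 \<in> borel_partitions"
    and osc: "\<And>A B z z'. A \<in> P0 \<Longrightarrow> B \<in> Q0 \<Longrightarrow> z \<in> A \<times> B \<Longrightarrow> z' \<in> A \<times> B \<Longrightarrow> \<bar>h z - h z'\<bar> \<le> e"
  shows "\<bar>integral\<^sup>L (joining y P) h
    - (\<Sum>(A, B)\<in>P0 \<times> Q0. h (SOME z. z \<in> A \<times> B) * measure (joining y P) (A \<times> B))\<bar> \<le> e"
proof -
  interpret subprob_space "joining y P" by (rule subprob_space_joining[OF P])
  define c where "c R = h (SOME z. z \<in> fst R \<times> snd R)" for R :: "'a set \<times> 'b set"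
  let ?step = "\<lambda>z. \<Sum>R\<in>P0 \<times> Q0. c R * indicator (fst R \<times> snd R) z"
  have "finite (P0 \<times> Q0)"
    using borel_partitionsD(1)[OF PQ(1)] borel_partitionsD(1)[OF PQ(2)] by simp
  moreover have "fst R \<times> snd R \<in> sets borel" if "R \<in> P0 \<times> Q0" for R
    using that borel_partitionsD(2)[OF PQ(1)] borel_partitionsD(2)[OF PQ(2)] by (intro borel_Times) auto
  ultimately have step: "integrable (joining y P) ?step"
    "integral\<^sup>L (joining y P) ?step = (\<Sum>R\<in>P0 \<times> Q0. c R * measure (joining y P) (fst R \<times> snd R))"
    using integral_step_function[of "P0 \<times> Q0" "\<lambda>R. fst R \<times> snd R" c] by simp_all
  have "integrable (joining y P) h"
    by (rule integrable_continuous_on_compact[OF finite_measure_axioms sets_joining cpt h])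
  then have "integral\<^sup>L (joining y P) h
      - (\<Sum>(A, B)\<in>P0 \<times> Q0. h (SOME z. z \<in> A \<times> B) * measure (joining y P) (A \<times> B))
      = integral\<^sup>L (joining y P) (\<lambda>z. h z - ?step z)"
    using step by (simp add: c_def case_prod_unfold)
  also have "\<bar>\<dots>\<bar> \<le> e"
  proof (rule abs_integral_le_bound)
    show "(\<lambda>z. h z - ?step z) \<in> borel_measurable (joining y P)"
      using step(1) borel_measurable_continuous_onI[OF h]
      by (auto simp: measurable_cong_sets[OF sets_joining refl])
    show "\<bar>h z - ?step z\<bar> \<le> e" for z
      using rectangle_step_function_approx[OF PQ osc, where z = z] by (simp add: c_def case_prod_unfold)
  qed
  finally show ?thesis .
qed

lemma near_continuous_joining_integral:
  assumes cpt: "compact (UNIV :: ('a \<times> 'b) set)"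
    and dense1: "preimage_dense mu1 f1" and dense2: "preimage_dense mu2 f2"
    and h: "continuous_on UNIV h"
  shows "near_continuous (\<lambda>y P. integral\<^sup>L (joining y P) h) partition_net"
proof (rule near_continuous_approx)
  fix e :: real assume "e > 0"
  obtain P0 Q0 where PQ: "P0 \<in> borel_partitions" "Q0 \<in> borel_partitions"
    and osc: "\<And>A B z z'. A \<in> P0 \<Longrightarrow> B \<in> Q0 \<Longrightarrow> z \<in> A \<times> B \<Longrightarrow> z' \<in> A \<times> B \<Longrightarrow> \<bar>h z - h z'\<bar> \<le> e"
    using compact_product_fine_rectangular_partition[OF cpt h \<open>e > 0\<close>] by blast
  let ?g = "\<lambda>y P. \<Sum>(A, B)\<in>P0 \<times> Q0. h (SOME z. z \<in> A \<times> B) * measure (joining y P) (A \<times> B)"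
  have "near_continuous ?g partition_net"
    unfolding case_prod_unfold
    using borel_partitionsD(1,2)[OF PQ(1)] borel_partitionsD(1,2)[OF PQ(2)] dense1 dense2
    by (intro near_continuous_sum near_continuous_const_mult near_continuous_joining_Times) auto
  moreover have "eventually (\<lambda>P. \<bar>integral\<^sup>L (joining y P) h - ?g y P\<bar> \<le> e) partition_net" for y
    using eventually_partition_net_borel_partitions
    by eventually_elim (rule abs_integral_joining_minus_step_le[OF cpt h _ PQ osc])
  ultimately show "\<exists>g'. near_continuous g' partition_net \<and>
      (\<forall>y. eventually (\<lambda>P. \<bar>integral\<^sup>L (joining y P) h - g' y P\<bar> \<le> e) partition_net)"
    by blast
qed

end

theorem lemma3p6:
  fixes lam :: "'g::{topological_group_add, t2_space} measure"
    and f1 :: "'a::t2_space \<Rightarrow> 'g" and f2 :: "'b::t2_space \<Rightarrow> 'g"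
    and mu1 :: "'a measure" and mu2 :: "'b measure"
    and nu :: "('a \<times> 'b) measure"
    and phi :: "'g \<Rightarrow> ('a \<times> 'b) measure"
  assumes "compact (UNIV :: 'a set)" and "compact (UNIV :: 'b set)"
    and "compact (UNIV :: 'g set)"
    and "haar_prob lam"
    and "continuous_on UNIV f1" and "surj f1"
    and "continuous_on UNIV f2" and "surj f2"
    and "regular_prob mu1" and "regular_prob mu2"
    and "distr mu1 borel f1 = lam" and "distr mu2 borel f2 = lam"
    and "\<forall>e>0. \<forall>A\<in>sets borel. \<exists>B\<in>sets (borel :: 'g measure).
           measure mu1 ((A - f1 -` B) \<union> (f1 -` B - A)) < e"
    and "\<forall>e>0. \<forall>A\<in>sets borel. \<exists>B\<in>sets (borel :: 'g measure).
           measure mu2 ((A - f2 -` B) \<union> (f2 -` B - A)) < e"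
    and "regular_prob nu"
    and "\<forall>D\<in>sets (mu1 \<Otimes>\<^sub>M mu2). emeasure nu D = emeasure (mu1 \<Otimes>\<^sub>M mu2) D"
    and "\<forall>y. regular_prob (phi y) \<and>
           weak_star_tendsto (mu_yE lam f1 f2 nu y) (phi y) partition_net"
  shows "weak_star_continuous phi"
proof -
  interpret shifted_joining lam f1 f2 mu1 mu2 nu
    by (rule shifted_joining.intro) (fact assms)+
  have dense: "preimage_dense mu1 f1" "preimage_dense mu2 f2"
    using assms(13,14) unfolding preimage_dense_def by blast+
  have cpt: "compact (UNIV :: ('a \<times> 'b) set)"
    using compact_Times[OF assms(1,2)] by simp
  show ?thesis
    unfolding weak_star_continuous_def
  proof (intro allI impI)
    fix h :: "'a \<times> 'b \<Rightarrow> real" assume h: "continuous_on UNIV h"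
    show "continuous_on UNIV (\<lambda>y. integral\<^sup>L (phi y) h)"
    proof (rule continuous_on_limit_near_continuous[OF partition_net_neq_bot])
      show "near_continuous (\<lambda>y P. integral\<^sup>L (joining y P) h) partition_net"
        by (rule near_continuous_joining_integral[OF cpt dense h])
      show "((\<lambda>P. integral\<^sup>L (joining y P) h) \<longlongrightarrow> integral\<^sup>L (phi y) h) partition_net" for y
        using assms(17) h unfolding weak_star_tendsto_def by blast
    qed
  qed
qed

end
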